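(* The Taylor coefficients of $\log\mathbb{E}[z^V]=\sum_{k\ge0}q_kz^k$ around $z=0$ are $$q_0=-\frac{\theta}{\gamma}\,{}_2F_1(1,\gamma;1+\gamma;q),\qquad q_k=\theta\,\frac{(k-1)!}{(\gamma+1)_k}\,{}_2F_1(k,\gamma;1+\gamma+k;q)\quad(k\ge1).$$ Hence $\mathbb{P}(V=0)=e^{q_0}$ and $\mathbb{P}(V=n)=\frac1n\sum_{k=0}^{n-1}(n-k)q_{n-k}\mathbb{P}(V=k)$ for $n\ge1$.
   Context: Fix $\delta>0$ and $\alpha>\beta\ge0$, put $\lambda=\alpha-\beta$, $q=\beta/\alpha$, $\gamma=\delta/\lambda$, and fix $\theta>0$. Let $\xi(z)=\frac{q-z}{1-z}$. Let $V$ be a random variable on $\{0,1,\dots\}$ with $\log\mathbb{E}[z^V]=-\frac{\theta}{\gamma}{}_2F_1(1,\gamma;1+\gamma;\xi(z))$ for $z\in[0,1)$, where ${}_2F_1$ is the Gauss hypergeometric function and $(a)_k=\Gamma(a+k)/\Gamma(a)$ is the Pochhammer symbol. *)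

theory Defs
  imports "HOL-Probability.Probability"
begin

definition hyp2F1_series :: "real \<Rightarrow> real \<Rightarrow> real \<Rightarrow> real \<Rightarrow> real" where
  "hyp2F1_series a b c x =
     (\<Sum>n. pochhammer a n * pochhammer b n / pochhammer c n * x ^ n / fact n)"

text \<open>Gauss hypergeometric function on the real interval (-inf, 1): the series for |x| < 1,
  and for x \<le> -1 its analytic continuation given by the Pfaff transformation
  2F1(a,b;c;x) = (1-x)^(-a) 2F1(a,c-b;c;x/(x-1)), where x/(x-1) lies in [1/2,1).
  (Not used for x \<ge> 1.)\<close>
definition hyp2F1 :: "real \<Rightarrow> real \<Rightarrow> real \<Rightarrow> real \<Rightarrow> real" where
  "hyp2F1 a b c x =
     (if \<bar>x\<bar> < 1 then hyp2F1_series a b c x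
      else if x \<le> -1 then (1 - x) powr (-a) * hyp2F1_series a (c - b) c (x / (x - 1))
      else 0)"

end

theory Submission
  imports Defs "HOL-Complex_Analysis.Complex_Analysis"
begin

text \<open>
  Write \<open>h(x) = \<Sum>\<^sub>n x\<^sup>n / (\<gamma> + n)\<close>, so that \<open>\<^sub>2F\<^sub>1(1,\<gamma>;1+\<gamma>;x) = \<gamma> h(x)\<close> and
  \<open>log \<bbbE>[z\<^sup>V] = -\<theta> h(\<xi>(z)) =: f(z)\<close>. Since \<open>x h'(x) + \<gamma> h(x) = 1 / (1 - x)\<close> and
  \<open>1 - \<xi>(z) = (1 - q) / (1 - z)\<close>, the function \<open>f\<close> satisfies
  \<open>(q - z)(1 - z) f'(z) = \<theta> (1 - z) + \<gamma> (1 - q) f(z)\<close> for \<open>|z| < 1/2\<close>: a three-term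
  recurrence for its Taylor coefficients, determined by \<open>f(0)\<close>. Contiguous relations of the
  hypergeometric series show that the \<open>q\<^sub>k\<close> satisfy the same recurrence, so they are the
  Taylor coefficients of \<open>f\<close>. The generating function \<open>G\<close> of \<open>V\<close> agrees with \<open>exp f\<close> on
  \<open>(0, 1/2)\<close>, hence on the disc by analytic continuation, and comparing coefficients in
  \<open>G' = f' G\<close> gives the recursion for \<open>\<P>(V = n)\<close>.
\<close>

section \<open>Hypergeometric coefficient series\<close>

definition hyp_term :: "real \<Rightarrow> nat \<Rightarrow> nat \<Rightarrow> real" where
  "hyp_term g k m = fact (k - 1) / pochhammer (g + 1) k *
     (pochhammer (real k) m * pochhammer g m / pochhammer (1 + g + real k) m / fact m)"

context
  fixes g :: real
  assumes g_pos: "g > 0"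
begin

lemma hyp_term_pos: "k \<ge> 1 \<Longrightarrow> hyp_term g k m > 0"
  using g_pos unfolding hyp_term_def
  by (intro mult_pos_pos divide_pos_pos pochhammer_pos) auto

lemma hyp_term_0: "hyp_term g k 0 = fact (k - 1) / pochhammer (g + 1) k"
  by (simp add: hyp_term_def)

lemma hyp_term_Suc:
  assumes "k \<ge> 1"
  shows "hyp_term g k (Suc m) =
    hyp_term g k m * ((real k + real m) * (g + real m)) / ((1 + g + real k + real m) * (real m + 1))"
proof -
  have "pochhammer (1 + g + real k) m > 0" "pochhammer (g + 1) k > 0"
    using g_pos by (auto intro!: pochhammer_pos)
  then show ?thesis
    using g_pos unfolding hyp_term_def by (simp add: pochhammer_Suc fact_Suc field_simps)
qed

lemma hyp_term_Suc_index:
  assumes "k \<ge> 1"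
  shows "hyp_term g (Suc k) m = hyp_term g k (Suc m) * (real m + 1) / (g + real m)"
proof -
  have rec: "pochhammer (real k) (Suc m) = real k * pochhammer (real (Suc k)) m"
            "pochhammer (1 + g + real k) (Suc m) = (1 + g + real k) * pochhammer (1 + g + real (Suc k)) m"
    by (subst pochhammer_rec; simp add: add_ac)+
  have fact_k: "fact k = real k * fact (k - 1)"
    using assms by (simp add: fact_reduce)
  have "pochhammer (1 + g + real (Suc k)) m \<noteq> 0" "pochhammer (g + 1) k \<noteq> 0" "pochhammer g m \<noteq> 0"
    "1 + g + real k \<noteq> 0" "g + real m \<noteq> 0"
    using g_pos by (auto simp: pochhammer_eq_0_iff)
  then show ?thesis
    unfolding hyp_term_def rec
    by (simp add: pochhammer_Suc fact_Suc fact_k divide_simps) (simp add: algebra_simps)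
qed

lemma hyp_term_1: "hyp_term g 1 m = g / ((g + real m) * (g + real m + 1))"
proof (induction m)
  case 0
  have "g + g * g > 0" using g_pos by (simp add: add_pos_pos)
  then show ?case using g_pos by (simp add: hyp_term_0 field_simps)
next
  case (Suc m)
  have "hyp_term g 1 (Suc m) =
      hyp_term g 1 m * ((1 + real m) * (g + real m)) / ((1 + g + 1 + real m) * (real m + 1))"
    using hyp_term_Suc[of 1 m] by simp
  also have "\<dots> = g / ((g + real (Suc m)) * (g + real (Suc m) + 1))"
  proof -
    have "1 + g + 1 + real m \<noteq> 0" "g + real m \<noteq> 0" "g + real m + 1 \<noteq> 0" "g + real m + 2 \<noteq> 0"
      using g_pos by auto
    then show ?thesis unfolding Suc.IH by (simp add: divide_simps) (simp add: algebra_simps)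
  qed
  finally show ?case .
qed

lemma hyp_term_contiguous:
  assumes k: "k \<ge> 1"
  shows "(real k + 1) * hyp_term g (Suc k) m - (real k - g) * hyp_term g k m
         + (real k - 1) * hyp_term g (k - 1) (Suc m) - (real k + g) * hyp_term g k (Suc m) = 0"
proof -
  define a where "a = hyp_term g k m"
  have shift: "hyp_term g k (Suc m) = a * ((real k + real m) * (g + real m)) / ((1 + g + real k + real m) * (real m + 1))"
    unfolding a_def by (rule hyp_term_Suc[OF k])
  have index: "hyp_term g (Suc k) m = hyp_term g k (Suc m) * (real m + 1) / (g + real m)"
    by (rule hyp_term_Suc_index[OF k])
  have lower: "(real k - 1) * hyp_term g (k - 1) (Suc m) = (real k - 1) * (a * (g + real m) / (real m + 1))"
  proof (cases "k = 1")
    case False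
    then have "k - 1 \<ge> 1" "Suc (k - 1) = k" using k by auto
    then have "a = hyp_term g (k - 1) (Suc m) * (real m + 1) / (g + real m)"
      unfolding a_def using hyp_term_Suc_index[of "k - 1" m] by simp
    then show ?thesis using g_pos by (simp add: field_simps)
  qed simp
  have "g + real m \<noteq> 0" "real m + 1 \<noteq> 0" "1 + g + real k + real m \<noteq> 0" using g_pos by auto
  then show ?thesis unfolding index shift lower a_def[symmetric]
    by (simp add: divide_simps) (simp add: algebra_simps)
qed

lemma hyp_term_contiguous_0:
  assumes k: "k \<ge> 1"
  shows "(real k - 1) * hyp_term g (k - 1) 0 - (real k + g) * hyp_term g k 0 = (if k = 1 then -1 else 0)"
proof (cases "k = 1")
  case True
  then show ?thesis using g_pos by (simp add: hyp_term_0)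
next
  case False
  then obtain j where j: "k = Suc j" "j \<ge> 1" using k by (cases k) auto
  have "pochhammer (g + 1) j > 0" using g_pos by (intro pochhammer_pos) auto
  moreover have "(fact j :: real) = real j * fact (j - 1)" using j by (simp add: fact_reduce)
  ultimately show ?thesis using False j g_pos unfolding hyp_term_0
    by (simp add: pochhammer_Suc divide_simps)
qed

lemma summable_hyp_term:
  assumes k: "k \<ge> 1" and q: "0 \<le> q" "q < 1"
  shows "summable (\<lambda>m. hyp_term g k m * q ^ m)"
proof (rule summable_ratio_test[where c = "(1 + q) / 2" and N = "nat \<lceil>2 * real k / (1 - q)\<rceil>"])
  show "(1 + q) / 2 < 1" using q by simp
  fix n assume "n \<ge> nat \<lceil>2 * real k / (1 - q)\<rceil>"
  then have "real n \<ge> 2 * real k / (1 - q)" by linarith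
  then have large: "real n * (1 - q) \<ge> 2 * real k" using q by (simp add: field_simps)
  define r where "r = (real k + real n) * (g + real n) / ((1 + g + real k + real n) * (real n + 1))"
  have "r \<le> (real k + real n) / (real n + 1)"
    unfolding r_def using g_pos by (simp add: divide_simps) (simp add: algebra_simps mult_left_mono)
  moreover have "q * ((real k + real n) / (real n + 1)) \<le> (1 + q) / 2"
  proof -
    have "q * real k \<le> real k" using q by (simp add: mult_left_le_one_le)
    then have "q * (real k + real n) * 2 \<le> (1 + q) * (real n + 1)"
      using large q by (simp add: algebra_simps)
    then show ?thesis by (simp add: divide_simps)
  qed
  ultimately have ratio: "q * r \<le> (1 + q) / 2"
    using q by (meson mult_left_mono order_trans)
  have pos: "hyp_term g k n > 0" by (rule hyp_term_pos[OF k])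
  have "norm (hyp_term g k (Suc n) * q ^ Suc n) = hyp_term g k n * q ^ n * (q * r)"
    using pos q g_pos unfolding hyp_term_Suc[OF k] r_def by (simp add: abs_mult field_simps)
  also have "\<dots> \<le> hyp_term g k n * q ^ n * ((1 + q) / 2)"
    using ratio pos q by (intro mult_left_mono) auto
  also have "\<dots> = (1 + q) / 2 * norm (hyp_term g k n * q ^ n)"
    using pos q by (simp add: abs_mult)
  finally show "norm (hyp_term g k (Suc n) * q ^ Suc n) \<le> (1 + q) / 2 * norm (hyp_term g k n * q ^ n)" .
qed

end

definition hyp_sum :: "real \<Rightarrow> real \<Rightarrow> nat \<Rightarrow> real" where
  "hyp_sum g q k = (\<Sum>m. hyp_term g k m * q ^ m)"

definition lerch :: "real \<Rightarrow> real \<Rightarrow> real" where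
  "lerch g x = (\<Sum>n. x ^ n / (g + real n))"

lemma hyp2F1_eqI:
  assumes "\<bar>x\<bar> < 1"
    and "(\<lambda>n. pochhammer a n * pochhammer b n / pochhammer c n * x ^ n / fact n) sums s"
  shows "hyp2F1 a b c x = s"
  using assms unfolding hyp2F1_def hyp2F1_series_def by (simp add: sums_iff)

lemma summable_lerch:
  assumes "g > 0" "\<bar>x\<bar> < 1"
  shows "summable (\<lambda>n. x ^ n / (g + real n))"
proof (rule summable_comparison_test)
  show "\<exists>N. \<forall>n\<ge>N. norm (x ^ n / (g + real n)) \<le> \<bar>x\<bar> ^ n / g"
    using assms by (auto simp: abs_mult power_abs intro!: divide_left_mono)
  show "summable (\<lambda>n. \<bar>x\<bar> ^ n / g)"
    using assms by (intro summable_divide summable_geometric) auto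
qed

lemma lerch_sums: "g > 0 \<Longrightarrow> \<bar>x\<bar> < 1 \<Longrightarrow> (\<lambda>n. x ^ n / (g + real n)) sums lerch g x"
  unfolding lerch_def by (intro summable_sums summable_lerch)

lemma pochhammer_ratio_shift:
  assumes "(g::real) > 0"
  shows "pochhammer g n / pochhammer (1 + g) n = g / (g + real n)"
proof -
  have "pochhammer g (Suc n) = g * pochhammer (1 + g) n" by (simp add: pochhammer_rec add_ac)
  moreover have "pochhammer g (Suc n) = pochhammer g n * (g + real n)" by (simp add: pochhammer_Suc)
  moreover have "pochhammer (1 + g) n > 0" "g + real n > 0"
    using assms by (auto intro!: pochhammer_pos)
  ultimately show ?thesis by (simp add: field_simps)
qed

lemma hyp2F1_1_eq_lerch:
  assumes g: "(g::real) > 0" and x: "\<bar>x\<bar> < 1"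
  shows "hyp2F1 1 g (1 + g) x = g * lerch g x"
proof (rule hyp2F1_eqI[OF x])
  have "pochhammer 1 n * pochhammer g n / pochhammer (1 + g) n * x ^ n / fact n
      = pochhammer g n / pochhammer (1 + g) n * x ^ n" for n
    by (simp add: pochhammer_fact[symmetric])
  then have "pochhammer 1 n * pochhammer g n / pochhammer (1 + g) n * x ^ n / fact n = g * (x ^ n / (g + real n))" for n
    unfolding pochhammer_ratio_shift[OF g] by simp
  then show "(\<lambda>n. pochhammer 1 n * pochhammer g n / pochhammer (1 + g) n * x ^ n / fact n) sums (g * lerch g x)"
    using sums_mult[OF lerch_sums[OF g x], of g] by simp
qed

context
  fixes g q :: real
  assumes g_pos: "g > 0" and q_nonneg: "0 \<le> q" and q_less_1: "q < 1"
begin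

lemma hyp_sum_sums: "k \<ge> 1 \<Longrightarrow> (\<lambda>m. hyp_term g k m * q ^ m) sums hyp_sum g q k"
  unfolding hyp_sum_def using summable_hyp_term g_pos q_nonneg q_less_1 by (simp add: summable_sums)

lemma hyp_sum_recurrence:
  assumes k: "k \<ge> 1"
  shows "q * ((real k + 1) * hyp_sum g q (Suc k) - (real k - g) * hyp_sum g q k)
         + ((real k - 1) * hyp_sum g q (k - 1) - (real k + g) * hyp_sum g q k)
         = (if k = 1 then -1 else 0)"
proof -
  define c where "c m = (real k + 1) * hyp_term g (Suc k) m - (real k - g) * hyp_term g k m" for m
  define d where "d m = (real k - 1) * hyp_term g (k - 1) m - (real k + g) * hyp_term g k m" for m
  have c_sums: "(\<lambda>m. c m * q ^ m) sums ((real k + 1) * hyp_sum g q (Suc k) - (real k - g) * hyp_sum g q k)"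
    unfolding c_def left_diff_distrib mult.assoc
    by (intro sums_diff sums_mult hyp_sum_sums) (use k in auto)
  have lower_sums: "(\<lambda>m. (real k - 1) * (hyp_term g (k - 1) m * q ^ m)) sums ((real k - 1) * hyp_sum g q (k - 1))"
  proof (cases "k = 1")
    case False
    show ?thesis by (intro sums_mult hyp_sum_sums) (use k False in auto)
  qed simp
  have "(\<lambda>m. d m * q ^ m) =
      (\<lambda>m. (real k - 1) * (hyp_term g (k - 1) m * q ^ m) - (real k + g) * (hyp_term g k m * q ^ m))"
    by (simp add: d_def algebra_simps)
  then have "(\<lambda>m. d m * q ^ m) sums ((real k - 1) * hyp_sum g q (k - 1) - (real k + g) * hyp_sum g q k)"
    using sums_diff[OF lower_sums sums_mult[OF hyp_sum_sums[OF k]]] by simp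
  then have d_Suc_sums: "(\<lambda>m. d (Suc m) * q ^ Suc m)
      sums ((real k - 1) * hyp_sum g q (k - 1) - (real k + g) * hyp_sum g q k - d 0)"
    by (subst sums_Suc_iff) simp
  have shift: "d (Suc m) * q ^ Suc m = - q * (c m * q ^ m)" for m
  proof -
    have "d (Suc m) = - c m"
      using hyp_term_contiguous[OF g_pos k, of m] unfolding c_def d_def by simp
    then show ?thesis by simp
  qed
  have "(\<lambda>m. d (Suc m) * q ^ Suc m)
      sums (- q * ((real k + 1) * hyp_sum g q (Suc k) - (real k - g) * hyp_sum g q k))"
    unfolding shift by (rule sums_mult[OF c_sums])
  moreover have "d 0 = (if k = 1 then -1 else 0)"
    unfolding d_def using hyp_term_contiguous_0[OF g_pos k] by simp
  ultimately show ?thesis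
    using sums_unique2[OF d_Suc_sums] by (simp add: algebra_simps)
qed

lemma hyp2F1_eq_hyp_sum:
  assumes k: "k \<ge> 1"
  shows "fact (k - 1) / pochhammer (g + 1) k * hyp2F1 (real k) g (1 + g + real k) q = hyp_sum g q k"
proof -
  define C where "C = fact (k - 1) / pochhammer (g + 1) k"
  have C: "C > 0" unfolding C_def using g_pos by (intro divide_pos_pos pochhammer_pos) auto
  have "hyp2F1 (real k) g (1 + g + real k) q = hyp_sum g q k / C"
  proof (rule hyp2F1_eqI)
    show "\<bar>q\<bar> < 1" using q_nonneg q_less_1 by simp
    have "pochhammer (real k) m * pochhammer g m / pochhammer (1 + g + real k) m * q ^ m / fact m
          = hyp_term g k m * q ^ m / C" for m
      unfolding hyp_term_def C_def[symmetric] using C by simp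
    then show "(\<lambda>m. pochhammer (real k) m * pochhammer g m / pochhammer (1 + g + real k) m * q ^ m / fact m)
        sums (hyp_sum g q k / C)"
      using sums_divide[OF hyp_sum_sums[OF k]] by simp
  qed
  then show ?thesis using C unfolding C_def[symmetric] by simp
qed

lemma hyp_sum_1: "q * hyp_sum g q 1 = 1 - g * (1 - q) * lerch g q"
proof -
  have q: "\<bar>q\<bar> < 1" using q_nonneg q_less_1 by simp
  have "(\<lambda>n. q ^ Suc n / (g + real (Suc n))) sums (lerch g q - 1 / g)"
    using lerch_sums[OF g_pos q] by (subst sums_Suc_iff) simp
  from sums_diff[OF this sums_mult[OF lerch_sums[OF g_pos q], of q]]
  have "(\<lambda>n. q ^ Suc n / (g + real (Suc n)) - q * (q ^ n / (g + real n)))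
      sums (lerch g q - 1 / g - q * lerch g q)" .
  moreover have "q ^ Suc n / (g + real (Suc n)) - q * (q ^ n / (g + real n)) = - (q * (hyp_term g 1 n * q ^ n) / g)" for n
  proof -
    have "g + real n \<noteq> 0" "g + real n + 1 \<noteq> 0" using g_pos by auto
    then show ?thesis unfolding hyp_term_1[OF g_pos] using g_pos
      by (simp add: divide_simps) (simp add: algebra_simps)
  qed
  moreover have "(\<lambda>n. - (q * (hyp_term g 1 n * q ^ n) / g)) sums (- (q * hyp_sum g q 1 / g))"
    by (intro sums_minus sums_divide sums_mult hyp_sum_sums) simp
  ultimately have "lerch g q - 1 / g - q * lerch g q = - (q * hyp_sum g q 1 / g)"
    using sums_unique2 by simp
  then have "g * (g * lerch g q + q * hyp_sum g q 1) = g * (1 + g * q * lerch g q)"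
    using g_pos by (simp add: field_simps)
  then have "g * lerch g q + q * hyp_sum g q 1 = 1 + g * q * lerch g q"
    using g_pos by simp
  then show ?thesis by (simp add: algebra_simps)
qed

end

text \<open>The paper's \<open>q\<^sub>k\<close>: \<open>q\<^sub>0 = -\<theta> h(q)\<close> and \<open>q\<^sub>k = \<theta> (k-1)! / (\<gamma>+1)\<^sub>k \<^sub>2F\<^sub>1(k,\<gamma>;1+\<gamma>+k;q)\<close>,
  the latter summed termwise as \<open>hyp_sum\<close>.\<close>

definition log_pgf_coeff :: "real \<Rightarrow> real \<Rightarrow> real \<Rightarrow> nat \<Rightarrow> real" where
  "log_pgf_coeff g q th k = (if k = 0 then - th * lerch g q else th * hyp_sum g q k)"

lemma log_pgf_coeff_recurrence:
  fixes g q th :: real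
  assumes g: "g > 0" and q: "0 \<le> q" "q < 1"
  defines "c \<equiv> log_pgf_coeff g q th"
  shows "q * real (Suc n) * c (Suc n) - (1 + q) * real n * c n
           + (if n = 0 then 0 else real (n - 1) * c (n - 1))
         = th * (if n = 0 then 1 else if n = 1 then -1 else 0) + g * (1 - q) * c n"
proof (cases "n = 0")
  case True
  have "th * (q * hyp_sum g q 1) = th * (1 - g * (1 - q) * lerch g q)"
    by (simp only: hyp_sum_1[OF g q])
  with True show ?thesis by (simp add: c_def log_pgf_coeff_def algebra_simps)
next
  case False
  define e :: real where "e = (if n = 1 then -1 else 0)"
  have "n - 1 = 0 \<longleftrightarrow> n = 1" using False by auto
  then have lower: "real (n - 1) * c (n - 1) = th * ((real n - 1) * hyp_sum g q (n - 1))"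
    using False by (auto simp: c_def log_pgf_coeff_def of_nat_diff)
  have coeffs: "c n = th * hyp_sum g q n" "c (Suc n) = th * hyp_sum g q (Suc n)"
    using False by (simp_all add: c_def log_pgf_coeff_def)
  have "q * ((real n + 1) * hyp_sum g q (Suc n) - (real n - g) * hyp_sum g q n)
         + ((real n - 1) * hyp_sum g q (n - 1) - (real n + g) * hyp_sum g q n) = e"
    using hyp_sum_recurrence[OF g q] False unfolding e_def by simp
  then have "th * (q * ((real n + 1) * hyp_sum g q (Suc n) - (real n - g) * hyp_sum g q n)
         + ((real n - 1) * hyp_sum g q (n - 1) - (real n + g) * hyp_sum g q n)) = th * e"
    by simp
  then have "q * real (Suc n) * c (Suc n) - (1 + q) * real n * c n + real (n - 1) * c (n - 1)
      = th * e + g * (1 - q) * c n"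
    unfolding lower coeffs by (simp add: algebra_simps)
  then show ?thesis using False unfolding e_def by simp
qed

lemma fps_nth_ode_operator:
  fixes c :: "'a :: comm_ring_1"
  shows "((fps_const c - fps_X) * (1 - fps_X) * fps_deriv f) $ n
     = c * of_nat (Suc n) * f $ Suc n - (1 + c) * of_nat n * f $ n
       + (if n = 0 then 0 else of_nat (n - 1) * f $ (n - 1))"
proof -
  have "(fps_const c - fps_X) * (1 - fps_X) * fps_deriv f
      = fps_const c * fps_deriv f - fps_const (1 + c) * (fps_X * fps_deriv f) + fps_X * (fps_X * fps_deriv f)"
    by (simp add: fps_const_add[symmetric, of 1 c] algebra_simps del: fps_const_add)
  then show ?thesis
    by (cases n; cases "n - 1") (auto simp: algebra_simps)
qed

lemma fps_ode_homogeneous_eq_0: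
  fixes D :: "complex fps" and c :: complex and a :: real
  assumes a: "a \<ge> 0"
    and ode: "(fps_const c - fps_X) * (1 - fps_X) * fps_deriv D = fps_const (of_real a) * D"
    and D0: "D $ 0 = 0"
  shows "D = 0"
proof -
  have rec: "c * of_nat (Suc n) * D $ Suc n - (1 + c) * of_nat n * D $ n
       + (if n = 0 then 0 else of_nat (n - 1) * D $ (n - 1)) = of_real a * D $ n" for n
    using arg_cong[OF ode, of "\<lambda>f. f $ n"] unfolding fps_nth_ode_operator by simp
  have "D $ n = 0" for n
  proof (cases "c = 0")
    case True
    show ?thesis
    proof (induction n)
      case (Suc n)
      have "(of_nat (Suc n) + of_real a) * D $ Suc n = 0"
        using rec[of "Suc n"] Suc.IH True by (simp add: algebra_simps neg_eq_iff_add_eq_0)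
      moreover have "(of_nat (Suc n) + of_real a :: complex) \<noteq> 0"
        using a by (metis add_pos_nonneg of_nat_0_less_iff of_real_add of_real_eq_0_iff of_real_of_nat_eq
                          order_less_irrefl zero_less_Suc)
      ultimately show ?case by simp
    qed (rule D0)
  next
    case False
    have "D $ n = 0 \<and> D $ Suc n = 0" for n
    proof (induction n)
      case 0
      then show ?case using rec[of 0] D0 False by simp
    next
      case (Suc n)
      then have "c * of_nat (Suc (Suc n)) * D $ Suc (Suc n) = 0"
        using rec[of "Suc n"] by simp
      then show ?case using Suc False by (simp del: of_nat_Suc)
    qed
    then show ?thesis by simp
  qed
  then show ?thesis by (simp add: fps_ext)
qed

section \<open>The complex logarithm of the generating function\<close>

definition lerch_fps :: "real \<Rightarrow> complex fps" where
  "lerch_fps g = Abs_fps (\<lambda>n. complex_of_real (1 / (g + real n)))"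

context
  fixes g :: real
  assumes g_pos: "g > 0"
begin

lemma fps_conv_radius_lerch_fps: "fps_conv_radius (lerch_fps g) \<ge> 1"
  unfolding fps_conv_radius_def
proof (rule conv_radius_geI_ex')
  fix r :: real assume "0 < r" "ereal r < 1"
  then have "summable (\<lambda>n. complex_of_real (r ^ n / (g + real n)))"
    using summable_lerch[OF g_pos] by (intro summable_of_real) simp
  then show "summable (\<lambda>n. lerch_fps g $ n * of_real r ^ n)"
    by (simp add: lerch_fps_def field_simps)
qed

lemma lerch_fps_ode: "fps_X * fps_deriv (lerch_fps g) + fps_const (of_real g) * lerch_fps g = Abs_fps (\<lambda>_. 1)"
proof (rule fps_ext)
  fix n
  have "g + real n \<noteq> 0" using g_pos by simp
  then have "real n / (g + real n) + g / (g + real n) = 1" by (simp add: divide_simps)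
  then have "complex_of_real (real n / (g + real n) + g / (g + real n)) = 1" by simp
  then show "(fps_X * fps_deriv (lerch_fps g) + fps_const (of_real g) * lerch_fps g) $ n = Abs_fps (\<lambda>_. 1) $ n"
    using g_pos by (cases n) (simp_all add: lerch_fps_def)
qed

lemma eval_lerch_fps_ode:
  assumes x: "norm x < 1"
  shows "x * eval_fps (fps_deriv (lerch_fps g)) x + of_real g * eval_fps (lerch_fps g) x = 1 / (1 - x)"
proof -
  have r: "ereal (norm x) < fps_conv_radius (lerch_fps g)"
    using fps_conv_radius_lerch_fps x by (meson ereal_less(3) less_le_trans ereal_le_le)
  have r': "ereal (norm x) < fps_conv_radius (fps_deriv (lerch_fps g))"
    using r fps_conv_radius_deriv[of "lerch_fps g"] by (meson less_le_trans)
  have "x * eval_fps (fps_deriv (lerch_fps g)) x + of_real g * eval_fps (lerch_fps g) x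
      = eval_fps (fps_X * fps_deriv (lerch_fps g) + fps_const (of_real g) * lerch_fps g) x"
  proof -
    have "ereal (norm x) < fps_conv_radius (fps_X * fps_deriv (lerch_fps g))"
      using fps_conv_radius_mult[of fps_X "fps_deriv (lerch_fps g)"] r' by (simp add: less_le_trans)
    moreover have "ereal (norm x) < fps_conv_radius (fps_const (complex_of_real g) * lerch_fps g)"
      using fps_conv_radius_cmult_left[of "complex_of_real g" "lerch_fps g"] r g_pos by simp
    ultimately show ?thesis using r r' by (simp add: eval_fps_add eval_fps_mult)
  qed
  also have "\<dots> = eval_fps (Abs_fps (\<lambda>_. 1)) x" by (simp add: lerch_fps_ode)
  also have "\<dots> = 1 / (1 - x)" unfolding eval_fps_def using suminf_geometric[OF x] by simp
  finally show ?thesis .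
qed

lemma eval_lerch_fps_of_real:
  "\<bar>x\<bar> < 1 \<Longrightarrow> eval_fps (lerch_fps g) (complex_of_real x) = complex_of_real (lerch g x)"
  using lerch_sums[OF g_pos, of x, THEN sums_of_real[where 'a=complex]]
  unfolding eval_fps_def lerch_fps_def by (simp add: sums_iff field_simps)

end

definition xi :: "real \<Rightarrow> complex \<Rightarrow> complex" where
  "xi q z = (complex_of_real q - z) / (1 - z)"

lemma xi_of_real: "xi q (complex_of_real x) = complex_of_real ((q - x) / (1 - x))"
  unfolding xi_def by simp

lemma norm_xi_less_1:
  assumes q: "0 \<le> q" "q < 1" and z: "norm z < 1/2"
  shows "norm (xi q z) < 1"
proof -
  have "norm (1 - z) > 1/2" using norm_triangle_ineq2[of 1 z] z by simp
  then have w: "norm (z / (1 - z)) < 1" using z by (simp add: norm_divide divide_simps)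
  have "xi q z = complex_of_real q - complex_of_real (1 - q) * (z / (1 - z))"
    using \<open>norm (1 - z) > 1/2\<close> unfolding xi_def by (auto simp: divide_simps algebra_simps)
  then have "norm (xi q z) \<le> norm (complex_of_real q) + norm (complex_of_real (1 - q) * (z / (1 - z)))"
    by (simp only: norm_triangle_ineq4)
  also have "\<dots> = q + (1 - q) * norm (z / (1 - z))"
    using q by (simp only: norm_mult norm_of_real abs_of_nonneg diff_ge_0_iff_ge less_imp_le)
  also have "\<dots> < q + (1 - q) * 1"
    using w q by (intro add_strict_left_mono mult_strict_left_mono) auto
  finally show ?thesis by simp
qed

lemma xi_has_field_derivative:
  assumes "z \<noteq> 1"
  shows "(xi q has_field_derivative (complex_of_real q - 1) / (1 - z)\<^sup>2) (at z)"
  unfolding xi_def[abs_def] using assms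
  by (auto intro!: derivative_eq_intros simp: power2_eq_square divide_simps algebra_simps)

text \<open>\<open>-\<theta> h(\<xi>(z))\<close>; the hypothesis on \<open>log \<bbbE>[z\<^sup>V]\<close> is its restriction to real \<open>z\<close>. On
  \<open>|z| < 1/2\<close> we have \<open>|\<xi>(z)| < 1\<close>, so the defining series of \<open>h\<close> converges there.\<close>

definition log_pgf :: "real \<Rightarrow> real \<Rightarrow> real \<Rightarrow> complex \<Rightarrow> complex" where
  "log_pgf g q th z = - complex_of_real th * eval_fps (lerch_fps g) (xi q z)"

context
  fixes g q th :: real
  assumes g_pos: "g > 0" and q_nonneg: "0 \<le> q" and q_less_1: "q < 1"
begin

lemma log_pgf_has_field_derivative:
  assumes z: "norm z < 1/2"
  shows "(log_pgf g q th has_field_derivative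
          - complex_of_real th * (eval_fps (fps_deriv (lerch_fps g)) (xi q z) * ((complex_of_real q - 1) / (1 - z)\<^sup>2))) (at z)"
proof -
  have "ereal (norm (xi q z)) < fps_conv_radius (lerch_fps g)"
    using fps_conv_radius_lerch_fps[OF g_pos] norm_xi_less_1[OF q_nonneg q_less_1 z]
    by (meson ereal_less(3) less_le_trans ereal_le_le)
  moreover have "z \<noteq> 1" using z by auto
  ultimately show ?thesis
    unfolding log_pgf_def[abs_def]
    by (intro DERIV_cmult DERIV_chain2[OF has_field_derivative_eval_fps xi_has_field_derivative])
qed

lemma holomorphic_log_pgf: "log_pgf g q th holomorphic_on ball 0 (1/2)"
  unfolding holomorphic_on_open[OF open_ball] using log_pgf_has_field_derivative by fastforce

lemma log_pgf_ode:
  assumes z: "norm z < 1/2"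
  shows "(complex_of_real q - z) * (1 - z) * deriv (log_pgf g q th) z
       = complex_of_real th * (1 - z) + complex_of_real (g * (1 - q)) * log_pgf g q th z"
proof -
  define w where "w = xi q z"
  define h where "h = eval_fps (lerch_fps g) w"
  define h' where "h' = eval_fps (fps_deriv (lerch_fps g)) w"
  have nz: "1 - z \<noteq> 0" using z by auto
  have ode: "w * h' + of_real g * h = 1 / (1 - w)"
    unfolding h_def h'_def w_def by (rule eval_lerch_fps_ode[OF g_pos norm_xi_less_1[OF q_nonneg q_less_1 z]])
  have w1: "1 - w = complex_of_real (1 - q) / (1 - z)"
    unfolding w_def xi_def using nz by (simp add: divide_simps)
  have "complex_of_real (1 - q) \<noteq> 0" using q_less_1 by simp
  have "(complex_of_real q - z) * (1 - z) * deriv (log_pgf g q th) z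
      = (complex_of_real q - z) * (1 - z) * (- complex_of_real th * (h' * ((complex_of_real q - 1) / (1 - z)\<^sup>2)))"
    using DERIV_imp_deriv[OF log_pgf_has_field_derivative[OF z]] unfolding h'_def w_def by simp
  also have "\<dots> = complex_of_real th * complex_of_real (1 - q) * (w * h')"
    unfolding w_def xi_def using nz by (simp add: power2_eq_square divide_simps) (simp add: algebra_simps)
  also have "w * h' = 1 / (1 - w) - of_real g * h" using ode by (simp add: algebra_simps)
  also have "complex_of_real th * complex_of_real (1 - q) * (1 / (1 - w) - of_real g * h)
      = complex_of_real th * (1 - z) + complex_of_real (g * (1 - q)) * (- complex_of_real th * h)"
    unfolding w1 using nz \<open>complex_of_real (1 - q) \<noteq> 0\<close>
    by (simp add: divide_simps) (simp add: algebra_simps)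
  finally show ?thesis unfolding log_pgf_def h_def w_def .
qed

lemma log_pgf_of_real:
  assumes x: "\<bar>x\<bar> < 1/2"
  shows "\<bar>(q - x) / (1 - x)\<bar> < 1"
    and "log_pgf g q th (complex_of_real x) = complex_of_real (- th * lerch g ((q - x) / (1 - x)))"
proof -
  have "norm (xi q (complex_of_real x)) < 1"
    using x by (intro norm_xi_less_1 q_nonneg q_less_1) simp
  then show a: "\<bar>(q - x) / (1 - x)\<bar> < 1"
    unfolding xi_of_real norm_of_real .
  show "log_pgf g q th (complex_of_real x) = complex_of_real (- th * lerch g ((q - x) / (1 - x)))"
    unfolding log_pgf_def xi_of_real eval_lerch_fps_of_real[OF g_pos a] by simp
qed

lemma log_pgf_coeff_fps_ode:
  defines "C \<equiv> Abs_fps (\<lambda>n. complex_of_real (log_pgf_coeff g q th n))"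
  shows "(fps_const (of_real q) - fps_X) * (1 - fps_X) * fps_deriv C
       = fps_const (of_real th) * (1 - fps_X) + fps_const (of_real (g * (1 - q))) * C"
proof (rule fps_ext)
  fix n
  have "complex_of_real (q * real (Suc n) * log_pgf_coeff g q th (Suc n) - (1 + q) * real n * log_pgf_coeff g q th n
           + (if n = 0 then 0 else real (n - 1) * log_pgf_coeff g q th (n - 1)))
      = complex_of_real (th * (if n = 0 then 1 else if n = 1 then -1 else 0) + g * (1 - q) * log_pgf_coeff g q th n)"
    using log_pgf_coeff_recurrence[OF g_pos q_nonneg q_less_1] by presburger
  then show "((fps_const (of_real q) - fps_X) * (1 - fps_X) * fps_deriv C) $ n
      = (fps_const (of_real th) * (1 - fps_X) + fps_const (of_real (g * (1 - q))) * C) $ n"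
    unfolding fps_nth_ode_operator C_def by (cases n) (auto split: if_splits)
qed

lemma fps_expansion_log_pgf:
  "fps_expansion (log_pgf g q th) 0 = Abs_fps (\<lambda>n. complex_of_real (log_pgf_coeff g q th n))"
proof -
  define F where "F = fps_expansion (log_pgf g q th) 0"
  define C where "C = Abs_fps (\<lambda>n. complex_of_real (log_pgf_coeff g q th n))"
  define k where "k = fps_const (complex_of_real (g * (1 - q)))"
  have F_exp: "log_pgf g q th has_fps_expansion F"
    unfolding F_def by (rule has_fps_expansion_fps_expansion[OF open_ball _ holomorphic_log_pgf]) simp
  have lhs_exp: "(\<lambda>z. (of_real q - z) * (1 - z) * deriv (log_pgf g q th) z) has_fps_expansion
          (fps_const (of_real q) - fps_X) * (1 - fps_X) * fps_deriv F"
    by (intro has_fps_expansion_mult has_fps_expansion_diff has_fps_expansion_const has_fps_expansion_fps_X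
          has_fps_expansion_1 has_fps_expansion_deriv F_exp)
  moreover have "eventually (\<lambda>z. z \<in> ball 0 (1/2)) (nhds 0)"
    by (intro eventually_nhds_in_open) auto
  then have ode: "eventually (\<lambda>z. (of_real q - z) * (1 - z) * deriv (log_pgf g q th) z
      = of_real th * (1 - z) + of_real (g * (1 - q)) * log_pgf g q th z) (nhds 0)"
    by eventually_elim (simp add: log_pgf_ode)
  have "(\<lambda>z. of_real th * (1 - z) + of_real (g * (1 - q)) * log_pgf g q th z) has_fps_expansion
          (fps_const (of_real q) - fps_X) * (1 - fps_X) * fps_deriv F"
    using has_fps_expansion_cong[OF ode refl] lhs_exp by simp
  moreover have "(\<lambda>z. of_real th * (1 - z) + of_real (g * (1 - q)) * log_pgf g q th z) has_fps_expansion
          fps_const (of_real th) * (1 - fps_X) + k * F"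
    unfolding k_def
    by (intro has_fps_expansion_add has_fps_expansion_cmult_left has_fps_expansion_diff
          has_fps_expansion_fps_X has_fps_expansion_1 F_exp)
  ultimately have F_ode: "(fps_const (of_real q) - fps_X) * (1 - fps_X) * fps_deriv F
      = fps_const (of_real th) * (1 - fps_X) + k * F"
    using fps_expansion_unique_complex by blast
  have hom: "(fps_const (of_real q) - fps_X) * (1 - fps_X) * fps_deriv (F - C) = k * (F - C)"
    using F_ode log_pgf_coeff_fps_ode unfolding C_def[symmetric] k_def[symmetric]
    by (simp add: right_diff_distrib)
  have D0: "(F - C) $ 0 = 0"
    using log_pgf_of_real(2)[of 0] fps_nth_fps_expansion[OF F_exp, of 0]
    by (simp add: C_def log_pgf_coeff_def)
  have "F - C = 0"
    using g_pos q_less_1 by (intro fps_ode_homogeneous_eq_0[OF _ hom[unfolded k_def] D0]) simp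
  then show ?thesis unfolding F_def C_def by simp
qed

lemma log_pgf_coeff_sums:
  assumes z: "norm z < 1/2"
  shows "(\<lambda>n. complex_of_real (log_pgf_coeff g q th n) * z ^ n) sums log_pgf g q th z"
proof -
  have holo: "log_pgf g q th holomorphic_on eball 0 (ereal (1/2))"
    using holomorphic_log_pgf by simp
  have "ereal (norm z) < fps_conv_radius (fps_expansion (log_pgf g q th) 0)"
    using z conv_radius_fps_expansion[OF holo] by (auto intro: less_le_trans[rotated])
  then have "(\<lambda>n. fps_expansion (log_pgf g q th) 0 $ n * z ^ n) sums log_pgf g q th z"
    using sums_eval_fps eval_fps_expansion'[OF holo] z by fastforce
  then show ?thesis unfolding fps_expansion_log_pgf by simp
qed

end

section \<open>Probability generating functions\<close>

lemma fps_deriv_eq_mult_if_eq_exp: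
  fixes f G :: "complex \<Rightarrow> complex"
  assumes S: "open S" "0 \<in> S" and f: "f holomorphic_on S"
    and F: "f has_fps_expansion F" and P: "G has_fps_expansion P"
    and G_eq: "\<And>z. z \<in> S \<Longrightarrow> G z = exp (f z)"
  shows "fps_deriv P = fps_deriv F * P"
proof -
  have "eventually (\<lambda>z. z \<in> S) (nhds 0)"
    using S by (intro eventually_nhds_in_open)
  then have "eventually (\<lambda>z. deriv G z = deriv f z * G z) (nhds 0)"
  proof eventually_elim
    case (elim z)
    have "eventually (\<lambda>w. w \<in> S) (nhds z)"
      using elim S by (intro eventually_nhds_in_open) auto
    then have "deriv G z = deriv (\<lambda>w. exp (f w)) z"
      by (intro deriv_cong_ev) (auto elim!: eventually_mono simp: G_eq)
    also have "(f has_field_derivative deriv f z) (at z)"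
      using f S elim by (simp add: DERIV_deriv_iff_field_differentiable holomorphic_on_imp_differentiable_at)
    then have "deriv (\<lambda>w. exp (f w)) z = exp (f z) * deriv f z"
      by (intro DERIV_imp_deriv DERIV_chain2[OF DERIV_exp])
    finally show ?case using G_eq[OF elim] by simp
  qed
  then have "deriv G has_fps_expansion fps_deriv F * P"
    using has_fps_expansion_cong[of "deriv G" "\<lambda>z. deriv f z * G z"]
    by (simp add: has_fps_expansion_mult has_fps_expansion_deriv F P)
  then show ?thesis
    using fps_expansion_unique_complex has_fps_expansion_deriv[OF P] by blast
qed

lemma fps_nth_eq_if_fps_deriv_eq_mult:
  fixes P F :: "'a :: field_char_0 fps"
  assumes eq: "fps_deriv P = fps_deriv F * P" and n: "n \<ge> 1"
  shows "P $ n = 1 / of_nat n * (\<Sum>k<n. of_nat (n - k) * F $ (n - k) * P $ k)"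
proof -
  obtain m where m: "n = Suc m" using n by (cases n) auto
  have "of_nat n * P $ n = (P * fps_deriv F) $ m"
    using arg_cong[OF eq, of "\<lambda>f. f $ m"] by (simp add: m mult.commute)
  also have "\<dots> = (\<Sum>k=0..m. P $ k * (of_nat (Suc (m - k)) * F $ Suc (m - k)))"
    by (simp add: fps_mult_nth)
  also have "\<dots> = (\<Sum>k<n. of_nat (n - k) * F $ (n - k) * P $ k)"
    unfolding m atLeast0AtMost lessThan_Suc_atMost
    by (intro sum.cong refl) (simp add: Suc_diff_le mult_ac)
  finally show ?thesis using n by (simp add: field_simps)
qed

lemma expectation_power_sums:
  fixes V :: "nat pmf"
  assumes x: "\<bar>x\<bar> \<le> 1"
  shows "(\<lambda>n. pmf V n * x ^ n) sums measure_pmf.expectation V (\<lambda>n. x ^ n)"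
proof -
  have "integrable (measure_pmf V) (\<lambda>n. x ^ n)"
    by (intro measure_pmf.integrable_const_bound[where B = 1]) (auto simp: power_abs x power_le_one)
  then have "integrable (count_space UNIV) (\<lambda>n. pmf V n * x ^ n)"
    unfolding measure_pmf_eq_density by (subst (asm) integrable_density) auto
  moreover have "measure_pmf.expectation V (\<lambda>n. x ^ n) = (\<integral>n. pmf V n * x ^ n \<partial>count_space UNIV)"
    unfolding measure_pmf_eq_density by (subst integral_density) auto
  ultimately show ?thesis using sums_integral_count_space_nat by simp
qed

lemma expectation_power_pos:
  fixes x :: real
  assumes "0 < x" "x \<le> 1"
  shows "measure_pmf.expectation V (\<lambda>n. x ^ n) > 0"
proof -
  obtain i where "i \<in> set_pmf V" using set_pmf_not_empty[of V] by blast
  then have "pmf V i * x ^ i > 0" using assms by (simp add: set_pmf_iff)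
  moreover have S: "(\<lambda>n. pmf V n * x ^ n) sums measure_pmf.expectation V (\<lambda>n. x ^ n)"
    using assms by (intro expectation_power_sums) simp
  ultimately have "0 < (\<Sum>n. pmf V n * x ^ n)"
    using assms by (intro suminf_pos2[where i = i]) (auto simp: sums_iff)
  then show ?thesis using S by (simp add: sums_iff)
qed

definition pgf_fps :: "nat pmf \<Rightarrow> complex fps" where
  "pgf_fps V = Abs_fps (\<lambda>n. complex_of_real (pmf V n))"

lemma eval_pgf_fps_of_real:
  "\<bar>x\<bar> \<le> 1 \<Longrightarrow> eval_fps (pgf_fps V) (complex_of_real x) = complex_of_real (measure_pmf.expectation V (\<lambda>n. x ^ n))"
  using expectation_power_sums[of x V, THEN sums_of_real[where 'a = complex]]
  unfolding eval_fps_def pgf_fps_def by (simp add: sums_iff)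

lemma fps_conv_radius_pgf_fps: "fps_conv_radius (pgf_fps V) \<ge> 1"
  unfolding fps_conv_radius_def
proof (rule conv_radius_geI_ex')
  fix r :: real assume "0 < r" "ereal r < 1"
  then have "summable (\<lambda>n. complex_of_real (pmf V n * r ^ n))"
    using expectation_power_sums[of r V] by (intro summable_of_real) (auto simp: sums_iff)
  then show "summable (\<lambda>n. pgf_fps V $ n * of_real r ^ n)"
    by (simp add: pgf_fps_def)
qed

lemma zero_islimpt_of_real_interval:
  assumes "a > 0"
  shows "0 islimpt complex_of_real ` {0<..<a}"
  unfolding islimpt_approachable
proof (intro allI impI)
  fix e :: real assume "e > 0"
  define y where "y = min e a / 2"
  have y: "0 < y" "y < a" "y < e" using \<open>e > 0\<close> assms unfolding y_def by auto
  show "\<exists>x'\<in>complex_of_real ` {0<..<a}. x' \<noteq> 0 \<and> dist x' 0 < e"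
    by (rule bexI[of _ "complex_of_real y"]) (use y in auto)
qed

context
  fixes g q th :: real and V :: "nat pmf"
  assumes g_pos: "g > 0" and q_nonneg: "0 \<le> q" and q_less_1: "q < 1"
    and ln_pgf: "\<And>x. 0 < x \<Longrightarrow> x < 1/2 \<Longrightarrow>
      ln (measure_pmf.expectation V (\<lambda>n. x ^ n)) = - th * lerch g ((q - x) / (1 - x))"
begin

lemma eval_pgf_fps_eq_exp_log_pgf:
  assumes z: "norm z < 1/2"
  shows "eval_fps (pgf_fps V) z = exp (log_pgf g q th z)"
proof -
  have "ball 0 (1/2) \<subseteq> eball (0::complex) (fps_conv_radius (pgf_fps V))"
    using fps_conv_radius_pgf_fps[of V] by (auto simp: less_le_trans[of _ 1] one_ereal_def)
  then have holo: "(\<lambda>z. eval_fps (pgf_fps V) z - exp (log_pgf g q th z)) holomorphic_on ball 0 (1/2)"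
    using holomorphic_log_pgf[OF g_pos q_nonneg q_less_1]
    by (intro holomorphic_intros holomorphic_on_subset[OF holomorphic_on_eval_fps]) auto
  have on_interval: "eval_fps (pgf_fps V) z - exp (log_pgf g q th z) = 0"
    if "z \<in> complex_of_real ` {0<..<1/2}" for z
  proof -
    from that obtain x where x: "z = complex_of_real x" "0 < x" "x < 1/2" by auto
    have "measure_pmf.expectation V (\<lambda>n. x ^ n) > 0"
      using x by (intro expectation_power_pos) auto
    then have "measure_pmf.expectation V (\<lambda>n. x ^ n) = exp (ln (measure_pmf.expectation V (\<lambda>n. x ^ n)))"
      by simp
    also have "\<dots> = exp (- th * lerch g ((q - x) / (1 - x)))"
      using ln_pgf[OF x(2,3)] by simp
    finally have "complex_of_real (measure_pmf.expectation V (\<lambda>n. x ^ n))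
        = complex_of_real (exp (- th * lerch g ((q - x) / (1 - x))))"
      by simp
    then have "complex_of_real (measure_pmf.expectation V (\<lambda>n. x ^ n))
        = exp (log_pgf g q th (complex_of_real x))"
      using x log_pgf_of_real(2)[OF g_pos q_nonneg q_less_1, of x th] by (simp add: exp_of_real[symmetric])
    then show ?thesis
      using x eval_pgf_fps_of_real[of x V] by simp
  qed
  have "0 islimpt complex_of_real ` {0<..<1/2}"
    by (rule zero_islimpt_of_real_interval) simp
  moreover have "complex_of_real ` {0<..<1/2} \<subseteq> ball 0 (1/2)" by auto
  ultimately have "eval_fps (pgf_fps V) z - exp (log_pgf g q th z) = 0"
    using z by (intro analytic_continuation[OF holo open_ball connected_ball _ _ _ on_interval]) auto
  then show ?thesis by simp
qed

lemma expectation_power_eq_exp: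
  assumes x: "\<bar>x\<bar> < 1/2"
  shows "measure_pmf.expectation V (\<lambda>n. x ^ n) = exp (- th * lerch g ((q - x) / (1 - x)))"
proof -
  have "complex_of_real (measure_pmf.expectation V (\<lambda>n. x ^ n)) = exp (log_pgf g q th (complex_of_real x))"
    using x eval_pgf_fps_of_real[of x V] eval_pgf_fps_eq_exp_log_pgf[of "complex_of_real x"] by simp
  then show ?thesis
    unfolding log_pgf_of_real(2)[OF g_pos q_nonneg q_less_1 x] exp_of_real of_real_eq_iff .
qed

lemma log_pgf_coeff_sums_ln_expectation:
  assumes x: "\<bar>x\<bar> < 1/2"
  shows "(\<lambda>k. log_pgf_coeff g q th k * x ^ k) sums ln (measure_pmf.expectation V (\<lambda>n. x ^ n))"
proof -
  have "(\<lambda>k. complex_of_real (log_pgf_coeff g q th k * x ^ k))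
      sums complex_of_real (- th * lerch g ((q - x) / (1 - x)))"
    using log_pgf_coeff_sums[OF g_pos q_nonneg q_less_1, of "complex_of_real x" th] x
    unfolding log_pgf_of_real(2)[OF g_pos q_nonneg q_less_1 x] by simp
  then show ?thesis
    unfolding expectation_power_eq_exp[OF x] sums_of_real_iff by simp
qed

lemma pmf_0_eq_exp_log_pgf_coeff: "pmf V 0 = exp (log_pgf_coeff g q th 0)"
proof -
  have "(\<lambda>n. pmf V n * 0 ^ n) sums measure_pmf.expectation V (\<lambda>n. 0 ^ n)"
    by (rule expectation_power_sums) simp
  then have "pmf V 0 = measure_pmf.expectation V (\<lambda>n. (0::real) ^ n)"
    using powser_sums_zero sums_unique2 by blast
  also have "\<dots> = exp (log_pgf_coeff g q th 0)"
    using expectation_power_eq_exp[of 0] by (simp add: log_pgf_coeff_def)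
  finally show ?thesis .
qed

lemma pmf_recursion:
  assumes n: "n \<ge> 1"
  shows "pmf V n = 1 / real n * (\<Sum>k<n. real (n - k) * log_pgf_coeff g q th (n - k) * pmf V k)"
proof -
  have "fps_conv_radius (pgf_fps V) > 0"
    using fps_conv_radius_pgf_fps[of V] by (auto intro: less_le_trans[of _ 1])
  then have "eval_fps (pgf_fps V) has_fps_expansion pgf_fps V"
    by (rule eval_fps_has_fps_expansion)
  moreover have "log_pgf g q th has_fps_expansion fps_expansion (log_pgf g q th) 0"
    by (rule has_fps_expansion_fps_expansion[OF open_ball _ holomorphic_log_pgf[OF g_pos q_nonneg q_less_1]]) simp
  ultimately have "fps_deriv (pgf_fps V) = fps_deriv (fps_expansion (log_pgf g q th) 0) * pgf_fps V"
    using fps_deriv_eq_mult_if_eq_exp[OF open_ball _ holomorphic_log_pgf[OF g_pos q_nonneg q_less_1]]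
      eval_pgf_fps_eq_exp_log_pgf by simp
  from fps_nth_eq_if_fps_deriv_eq_mult[OF this n]
  have "complex_of_real (pmf V n)
      = complex_of_real (1 / real n * (\<Sum>k<n. real (n - k) * log_pgf_coeff g q th (n - k) * pmf V k))"
    unfolding fps_expansion_log_pgf[OF g_pos q_nonneg q_less_1] by (simp add: pgf_fps_def)
  then show ?thesis by (simp only: of_real_eq_iff)
qed

end

theorem mainTheorem10:
  fixes \<delta> \<alpha> \<beta> \<theta> lam q \<gamma> :: real
    and V :: "nat pmf"
    and Q :: "nat \<Rightarrow> real"
  assumes "\<delta> > 0" and "\<alpha> > \<beta>" and "\<beta> \<ge> 0" and "\<theta> > 0"
    and "lam = \<alpha> - \<beta>" and "q = \<beta> / \<alpha>" and "\<gamma> = \<delta> / lam"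
    and pgf: "\<forall>z\<in>{0..<1}. ln (measure_pmf.expectation V (\<lambda>n. z ^ n)) =
               - (\<theta> / \<gamma>) * hyp2F1 1 \<gamma> (1 + \<gamma>) ((q - z) / (1 - z))"
    and Q0: "Q 0 = - (\<theta> / \<gamma>) * hyp2F1 1 \<gamma> (1 + \<gamma>) q"
    and Qk: "\<forall>k\<ge>1. Q k = \<theta> * fact (k - 1) / pochhammer (\<gamma> + 1) k
                          * hyp2F1 (real k) \<gamma> (1 + \<gamma> + real k) q"
  shows "(\<exists>r>0. \<forall>z. \<bar>z\<bar> < r \<longrightarrow>
            (\<lambda>k. Q k * z ^ k) sums ln (measure_pmf.expectation V (\<lambda>n. z ^ n)))
       \<and> pmf V 0 = exp (Q 0)
       \<and> (\<forall>n\<ge>1. pmf V n = (1 / real n) * (\<Sum>k<n. real (n - k) * Q (n - k) * pmf V k))"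
proof -
  have g: "\<gamma> > 0" and q: "0 \<le> q" "q < 1"
    using assms(1-3,5-7) by (auto simp: divide_less_eq)
  have "Q k = log_pgf_coeff \<gamma> q \<theta> k" for k
  proof (cases "k = 0")
    case True
    then show ?thesis
      using Q0 hyp2F1_1_eq_lerch[OF g, of q] g q by (simp add: log_pgf_coeff_def)
  next
    case False
    then have k: "k \<ge> 1" by simp
    then have "Q k = \<theta> * (fact (k - 1) / pochhammer (\<gamma> + 1) k * hyp2F1 (real k) \<gamma> (1 + \<gamma> + real k) q)"
      using Qk by simp
    also have "\<dots> = \<theta> * hyp_sum \<gamma> q k"
      by (simp only: hyp2F1_eq_hyp_sum[OF g q k])
    finally show ?thesis using False by (simp add: log_pgf_coeff_def)
  qed
  then have Q: "Q = log_pgf_coeff \<gamma> q \<theta>" ..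
  have ln_pgf: "ln (measure_pmf.expectation V (\<lambda>n. x ^ n)) = - \<theta> * lerch \<gamma> ((q - x) / (1 - x))"
    if x: "0 < x" "x < 1/2" for x
  proof -
    have "\<bar>(q - x) / (1 - x)\<bar> < 1" using x by (intro log_pgf_of_real(1)[OF g q]) simp
    then show ?thesis using x pgf g by (simp add: hyp2F1_1_eq_lerch[OF g])
  qed
  have "\<forall>x. \<bar>x\<bar> < 1/2 \<longrightarrow> (\<lambda>k. Q k * x ^ k) sums ln (measure_pmf.expectation V (\<lambda>n. x ^ n))"
    unfolding Q using log_pgf_coeff_sums_ln_expectation[OF g q ln_pgf] by blast
  moreover have "pmf V 0 = exp (Q 0)"
    unfolding Q by (rule pmf_0_eq_exp_log_pgf_coeff[OF g q ln_pgf])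
  moreover have "\<forall>n\<ge>1. pmf V n = 1 / real n * (\<Sum>k<n. real (n - k) * Q (n - k) * pmf V k)"
    unfolding Q using pmf_recursion[OF g q ln_pgf] by blast
  ultimately show ?thesis by (intro conjI exI[of _ "1/2"]) auto
qed
end
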